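(* Let $A$ be a division algebra over the field $\mathbb{C}(q)$ ($q$ an indeterminate), let $\alpha:A\to A$ be an algebra isomorphism, and let $A(X)_\alpha$ be the associated skew rational function algebra. If a skew rational fraction $f(X)\in A(X)_\alpha$ satisfies $f(X)=f(q^2X)$, then $f(X)$ is constant, i.e. $f\in A$.
   Context: The skew polynomial algebra $A[X]_\alpha$ consists of formal polynomials $\sum a_iX^i$ with $a_i\in A$, multiplied using the rule $Xa=\alpha(a)X$; it satisfies the Ore condition and $A(X)_\alpha$ denotes its fraction division algebra, whose elements are rational fractions in $X$ with coefficients in $A$ multiplying according to $Xa=\alpha(a)X$. The scalar $q$ is central, and $f(q^2X)$ denotes the result of substituting $q^2X$ for $X$ in $f$. *)

theory Defs
  imports "HOL-Computational_Algebra.Polynomial" "HOL-Computational_Algebra.Fraction_Field"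
begin

type_synonym cq = "complex poly fract"

definition qq :: cq where
  "qq = Fract [:0, 1:] 1"

text \<open>A division algebra over C(q): a division ring together with a ring homomorphism
  from C(q) into its centre (the structure map giving the scalar multiplication).\<close>
definition cq_division_algebra :: "(cq \<Rightarrow> 'a::division_ring) \<Rightarrow> bool" where
  "cq_division_algebra \<iota> \<longleftrightarrow>
     \<iota> 1 = 1 \<and> (\<forall>c d. \<iota> (c + d) = \<iota> c + \<iota> d) \<and> (\<forall>c d. \<iota> (c * d) = \<iota> c * \<iota> d) \<and>
     (\<forall>c a. \<iota> c * a = a * \<iota> c)"

definition algebra_iso :: "(cq \<Rightarrow> 'a::division_ring) \<Rightarrow> ('a \<Rightarrow> 'a) \<Rightarrow> bool" where
  "algebra_iso \<iota> \<alpha> \<longleftrightarrow> bij \<alpha> \<and> \<alpha> 1 = 1 \<and>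
     (\<forall>a b. \<alpha> (a + b) = \<alpha> a + \<alpha> b) \<and> (\<forall>a b. \<alpha> (a * b) = \<alpha> a * \<alpha> b) \<and>
     (\<forall>c a. \<alpha> (\<iota> c * a) = \<iota> c * \<alpha> a)"

text \<open>Skew polynomials in A[X]_alpha, represented by their coefficient sequences
  (p n = coefficient of X^n), finitely supported.\<close>
definition skew_poly :: "(nat \<Rightarrow> 'a::zero) \<Rightarrow> bool" where
  "skew_poly p \<longleftrightarrow> finite {n. p n \<noteq> 0}"

text \<open>Multiplication in A[X]_alpha using X a = alpha(a) X:
  (sum a_i X^i)(sum b_j X^j) = sum a_i alpha^i(b_j) X^(i+j).\<close>
definition skew_mult :: "('a \<Rightarrow> 'a) \<Rightarrow> (nat \<Rightarrow> 'a::ring) \<Rightarrow> (nat \<Rightarrow> 'a) \<Rightarrow> nat \<Rightarrow> 'a" where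
  "skew_mult \<alpha> p r = (\<lambda>n. \<Sum>i\<le>n. p i * (\<alpha> ^^ i) (r (n - i)))"

definition skew_const :: "'a \<Rightarrow> nat \<Rightarrow> 'a::zero" where
  "skew_const a = (\<lambda>n. if n = 0 then a else 0)"

text \<open>Substitution X := q^2 X: since q is central, sum a_i (q^2 X)^i = sum a_i q^(2i) X^i.\<close>
definition skew_subst_q2 :: "(cq \<Rightarrow> 'a::ring) \<Rightarrow> (nat \<Rightarrow> 'a) \<Rightarrow> nat \<Rightarrow> 'a" where
  "skew_subst_q2 \<iota> p = (\<lambda>i. \<iota> (qq ^ (2 * i)) * p i)"

text \<open>Elements of the fraction division algebra A(X)_alpha (Ore localisation of the domain
  A[X]_alpha) are right fractions p s^-1 with s \<noteq> 0; two fractions p s^-1 and p' s'^-1 are equal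
  iff there are skew polynomials u, v with s u = s' v \<noteq> 0 and p u = p' v.\<close>
definition skew_frac_eq :: "('a \<Rightarrow> 'a) \<Rightarrow> (nat \<Rightarrow> 'a::ring) \<times> (nat \<Rightarrow> 'a) \<Rightarrow> (nat \<Rightarrow> 'a) \<times> (nat \<Rightarrow> 'a) \<Rightarrow> bool" where
  "skew_frac_eq \<alpha> f g \<longleftrightarrow> (\<exists>u v. skew_poly u \<and> skew_poly v \<and>
      skew_mult \<alpha> (snd f) u = skew_mult \<alpha> (snd g) v \<and> skew_mult \<alpha> (snd f) u \<noteq> (\<lambda>_. 0) \<and>
      skew_mult \<alpha> (fst f) u = skew_mult \<alpha> (fst g) v)"

end

theory Submission
  imports Defs
begin

text \<open>Write the fraction as p s^-1, so that the hypothesis provides u, v \<noteq> 0 with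
  s u = s(q^2 X) v and p u = p(q^2 X) v. Comparing lowest-order terms, any nonzero g with
  g u = g(q^2 X) v, starting in degree m, forces u and v to start in a common degree k with
  u_k = q^(2m) v_k. Since q is transcendental, the degree m is thus determined by u and v
  alone. The polynomial g = p - a s, where a = p_m s_m^-1 cancels the lowest-order term of s,
  satisfies the same relation but does not start in degree m; hence g = 0 and p s^-1 = a.
  Only lowest-order terms enter.\<close>

lemma qq_power_eq_iff: "qq ^ m = qq ^ n \<longleftrightarrow> m = n"
proof
  have qq_power: "qq ^ k = Fract ([:0, 1:] ^ k) 1" for k
    unfolding qq_def by (induction k) (simp_all add: One_fract_def)
  assume "qq ^ m = qq ^ n"
  then have "([:0, 1:] ^ m :: complex poly) = [:0, 1:] ^ n"
    by (simp add: qq_power eq_fract)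
  then show "m = n"
    by (metis degree_linear_power)
qed simp

lemma cq_division_algebra_central: "cq_division_algebra \<iota> \<Longrightarrow> \<iota> c * a = a * \<iota> c"
  by (simp add: cq_division_algebra_def)

lemma cq_division_algebra_inj:
  assumes "cq_division_algebra \<iota>"
  shows "inj \<iota>"
proof (rule injI)
  fix c d
  assume "\<iota> c = \<iota> d"
  have add: "\<iota> (x + y) = \<iota> x + \<iota> y" and mult: "\<iota> (x * y) = \<iota> x * \<iota> y" and "\<iota> 1 = 1" for x y
    using assms unfolding cq_division_algebra_def by blast+
  have "\<iota> (c - d) = 0"
    using add[of "c - d" d] \<open>\<iota> c = \<iota> d\<close> by simp
  show "c = d"
  proof (rule ccontr)
    assume "c \<noteq> d"
    then have "1 = \<iota> ((c - d) * inverse (c - d))"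
      using \<open>\<iota> 1 = 1\<close> by simp
    also have "\<dots> = 0"
      using \<open>\<iota> (c - d) = 0\<close> by (simp only: mult mult_zero_left)
    finally show False
      by simp
  qed
qed

lemma cq_division_algebra_eq_0_iff:
  assumes "cq_division_algebra \<iota>"
  shows "\<iota> c = 0 \<longleftrightarrow> c = 0"
proof -
  have "\<iota> (0 + 0) = \<iota> 0 + \<iota> 0"
    using assms unfolding cq_division_algebra_def by blast
  then have "\<iota> 0 = 0"
    by simp
  with cq_division_algebra_inj[OF assms] show ?thesis
    by (metis injD)
qed

lemma algebra_iso_funpow:
  assumes "algebra_iso \<iota> \<alpha>"
  shows "algebra_iso \<iota> (\<alpha> ^^ n)"
proof -
  have "bij \<alpha>" and "\<alpha> 1 = 1" and add: "\<alpha> (a + b) = \<alpha> a + \<alpha> b"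
    and mult: "\<alpha> (a * b) = \<alpha> a * \<alpha> b" and lin: "\<alpha> (\<iota> c * a) = \<iota> c * \<alpha> a" for a b c
    using assms unfolding algebra_iso_def by blast+
  have "(\<alpha> ^^ n) 1 = 1"
    using \<open>\<alpha> 1 = 1\<close> by (induction n) simp_all
  moreover have "(\<alpha> ^^ n) (a + b) = (\<alpha> ^^ n) a + (\<alpha> ^^ n) b" for a b
    by (induction n) (simp_all add: add)
  moreover have "(\<alpha> ^^ n) (a * b) = (\<alpha> ^^ n) a * (\<alpha> ^^ n) b" for a b
    by (induction n) (simp_all add: mult)
  moreover have "(\<alpha> ^^ n) (\<iota> c * a) = \<iota> c * (\<alpha> ^^ n) a" for a c
    by (induction n) (simp_all add: lin)
  ultimately show ?thesis
    using \<open>bij \<alpha>\<close> by (simp add: algebra_iso_def)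
qed

lemma algebra_iso_zero:
  assumes "algebra_iso \<iota> \<alpha>"
  shows "\<alpha> 0 = 0"
proof -
  have "\<alpha> (0 + 0) = \<alpha> 0 + \<alpha> 0"
    using assms unfolding algebra_iso_def by blast
  then show ?thesis
    by simp
qed

lemma algebra_iso_inj: "algebra_iso \<iota> \<alpha> \<Longrightarrow> inj \<alpha>"
  by (simp add: algebra_iso_def bij_is_inj)

lemma algebra_iso_scale: "algebra_iso \<iota> \<alpha> \<Longrightarrow> \<alpha> (\<iota> c * a) = \<iota> c * \<alpha> a"
  unfolding algebra_iso_def by blast

lemma algebra_iso_eq_0_iff:
  assumes "algebra_iso \<iota> \<alpha>"
  shows "\<alpha> a = 0 \<longleftrightarrow> a = 0"
  using algebra_iso_inj[OF assms] algebra_iso_zero[OF assms] by (metis injD)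

definition seq_subdegree :: "(nat \<Rightarrow> 'a::zero) \<Rightarrow> nat" where
  "seq_subdegree f = (LEAST i. f i \<noteq> 0)"

lemma seq_subdegree_nonzero: "f \<noteq> (\<lambda>_. 0) \<Longrightarrow> f (seq_subdegree f) \<noteq> 0"
  unfolding seq_subdegree_def by (metis (mono_tags) LeastI)

lemma less_seq_subdegree_eq_0: "i < seq_subdegree f \<Longrightarrow> f i = 0"
  unfolding seq_subdegree_def using not_less_Least by blast

lemma seq_subdegree_eqI: "f m \<noteq> 0 \<Longrightarrow> (\<And>i. i < m \<Longrightarrow> f i = 0) \<Longrightarrow> seq_subdegree f = m"
  unfolding seq_subdegree_def by (metis (mono_tags) Least_equality not_less)

lemma skew_mult_lowest_term:
  fixes p r :: "nat \<Rightarrow> 'a::ring_no_zero_divisors"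
  assumes \<alpha>: "\<And>n a. (\<alpha> ^^ n) a = 0 \<longleftrightarrow> a = 0"
    and "p \<noteq> (\<lambda>_. 0)" and "r \<noteq> (\<lambda>_. 0)"
  shows "seq_subdegree (skew_mult \<alpha> p r) = seq_subdegree p + seq_subdegree r"
    and "skew_mult \<alpha> p r (seq_subdegree p + seq_subdegree r)
           = p (seq_subdegree p) * (\<alpha> ^^ seq_subdegree p) (r (seq_subdegree r))"
proof -
  define m k where "m = seq_subdegree p" and "k = seq_subdegree r"
  have term_eq_0: "p i * (\<alpha> ^^ i) (r (j - i)) = 0"
    if "i \<le> j" "j \<le> m + k" "(i, j) \<noteq> (m, m + k)" for i j
  proof (cases "i < m")
    case True
    then show ?thesis
      by (simp add: less_seq_subdegree_eq_0 m_def)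
  next
    case False
    with that have "j - i < k"
      by auto
    then show ?thesis
      by (simp add: \<alpha> less_seq_subdegree_eq_0 k_def)
  qed
  have below: "skew_mult \<alpha> p r j = 0" if "j < m + k" for j
    unfolding skew_mult_def using that by (intro sum.neutral) (simp add: term_eq_0)
  have lowest: "skew_mult \<alpha> p r (m + k) = p m * (\<alpha> ^^ m) (r k)"
    unfolding skew_mult_def by (subst sum.mono_neutral_right[of _ "{m}"]) (auto simp: term_eq_0)
  also have "\<dots> \<noteq> 0"
    using assms by (simp add: seq_subdegree_nonzero m_def k_def)
  finally have "seq_subdegree (skew_mult \<alpha> p r) = m + k"
    using below by (rule seq_subdegree_eqI)
  with lowest show "seq_subdegree (skew_mult \<alpha> p r) = seq_subdegree p + seq_subdegree r"
    and "skew_mult \<alpha> p r (seq_subdegree p + seq_subdegree r)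
           = p (seq_subdegree p) * (\<alpha> ^^ seq_subdegree p) (r (seq_subdegree r))"
    by (simp_all add: m_def k_def)
qed

lemma skew_mult_zero_right:
  assumes "algebra_iso \<iota> \<alpha>"
  shows "skew_mult \<alpha> p (\<lambda>_. 0) = (\<lambda>_. 0)"
  unfolding skew_mult_def by (simp add: algebra_iso_zero[OF algebra_iso_funpow[OF assms]])

lemma skew_mult_const_one_right:
  assumes "algebra_iso \<iota> \<alpha>"
  shows "skew_mult \<alpha> p (skew_const 1) = p"
proof
  fix n
  have "(\<alpha> ^^ i) 0 = 0" and "(\<alpha> ^^ i) 1 = 1" for i
    using algebra_iso_zero[OF algebra_iso_funpow[OF assms]] algebra_iso_funpow[OF assms]
    by (simp_all add: algebra_iso_def)
  then have "skew_mult \<alpha> p (skew_const 1) n = (\<Sum>i\<le>n. if i = n then p n else 0)"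
    unfolding skew_mult_def skew_const_def by (intro sum.cong) auto
  then show "skew_mult \<alpha> p (skew_const 1) n = p n"
    by simp
qed

lemma skew_mult_const_left: "skew_mult \<alpha> (skew_const a) p = (\<lambda>n. a * p n)"
proof
  fix n
  have "skew_mult \<alpha> (skew_const a) p n = (\<Sum>i\<le>n. if i = 0 then a * p n else 0)"
    unfolding skew_mult_def skew_const_def by (rule sum.cong) auto
  then show "skew_mult \<alpha> (skew_const a) p n = a * p n"
    by simp
qed

lemma skew_mult_diff_scaled_left:
  "skew_mult \<alpha> (\<lambda>i. p i - a * s i) u = (\<lambda>n. skew_mult \<alpha> p u n - a * skew_mult \<alpha> s u n)"
  unfolding skew_mult_def by (simp add: algebra_simps sum_subtractf sum_distrib_left)

lemma skew_subst_q2_diff_scaled: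
  assumes "cq_division_algebra \<iota>"
  shows "skew_subst_q2 \<iota> (\<lambda>i. p i - a * s i) = (\<lambda>i. skew_subst_q2 \<iota> p i - a * skew_subst_q2 \<iota> s i)"
  unfolding skew_subst_q2_def
  by (simp add: algebra_simps cq_division_algebra_central[OF assms])

lemma skew_subst_q2_eq_0_iff:
  assumes "cq_division_algebra \<iota>"
  shows "skew_subst_q2 \<iota> s i = 0 \<longleftrightarrow> s i = 0"
proof -
  have "qq \<noteq> 0"
    using qq_power_eq_iff[of 1 2] by auto
  then show ?thesis
    unfolding skew_subst_q2_def by (simp add: cq_division_algebra_eq_0_iff[OF assms])
qed

lemma seq_subdegree_skew_subst_q2:
  assumes "cq_division_algebra \<iota>"
  shows "seq_subdegree (skew_subst_q2 \<iota> s) = seq_subdegree s"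
  unfolding seq_subdegree_def by (simp add: skew_subst_q2_eq_0_iff[OF assms])

text \<open>The factor q^(2m) of the lowest term of s(q^2 X) passes through alpha^m because alpha is
  C(q)-linear.\<close>

lemma q2_relation_lowest_coeffs:
  assumes \<iota>: "cq_division_algebra \<iota>" and \<alpha>: "algebra_iso \<iota> \<alpha>"
    and s: "s \<noteq> (\<lambda>_. 0)" and u: "u \<noteq> (\<lambda>_. 0)" and v: "v \<noteq> (\<lambda>_. 0)"
    and eq: "skew_mult \<alpha> s u = skew_mult \<alpha> (skew_subst_q2 \<iota> s) v"
  shows "seq_subdegree u = seq_subdegree v"
    and "u (seq_subdegree u) = \<iota> (qq ^ (2 * seq_subdegree s)) * v (seq_subdegree v)"
proof -
  define m k l c where "m = seq_subdegree s" and "k = seq_subdegree u" and "l = seq_subdegree v"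
    and "c = \<iota> (qq ^ (2 * m))"
  have \<alpha>_eq_0_iff: "(\<alpha> ^^ n) a = 0 \<longleftrightarrow> a = 0" for n a
    using algebra_iso_eq_0_iff[OF algebra_iso_funpow[OF \<alpha>]] .
  have t: "skew_subst_q2 \<iota> s \<noteq> (\<lambda>_. 0)"
    using s by (simp add: fun_eq_iff skew_subst_q2_eq_0_iff[OF \<iota>])
  have t_subdegree: "seq_subdegree (skew_subst_q2 \<iota> s) = m"
    using seq_subdegree_skew_subst_q2[OF \<iota>] m_def by simp
  note lhs = skew_mult_lowest_term[OF \<alpha>_eq_0_iff s u, folded m_def k_def]
  note rhs = skew_mult_lowest_term[OF \<alpha>_eq_0_iff t v, unfolded t_subdegree, folded l_def]
  show "k = l"
    using lhs(1) rhs(1) eq by simp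
  then have "s m * (\<alpha> ^^ m) (u k) = c * s m * (\<alpha> ^^ m) (v k)"
    using lhs(2) rhs(2) eq by (simp add: skew_subst_q2_def c_def mult.assoc)
  also have "\<dots> = s m * (\<alpha> ^^ m) (c * v k)"
  proof -
    have "c * s m = s m * c"
      by (simp add: c_def cq_division_algebra_central[OF \<iota>])
    then show ?thesis
      by (simp add: c_def algebra_iso_scale[OF algebra_iso_funpow[OF \<alpha>]] mult.assoc)
  qed
  finally have "(\<alpha> ^^ m) (u k) = (\<alpha> ^^ m) (c * v k)"
    using seq_subdegree_nonzero[OF s] by (simp add: m_def)
  then show "u k = c * v l"
    using \<open>k = l\<close> algebra_iso_inj[OF algebra_iso_funpow[OF \<alpha>]] by (simp add: inj_eq)
qed

lemma q2_relation_subdegree_unique: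
  assumes \<iota>: "cq_division_algebra \<iota>" and \<alpha>: "algebra_iso \<iota> \<alpha>"
    and s: "s \<noteq> (\<lambda>_. 0)" and g: "g \<noteq> (\<lambda>_. 0)" and u: "u \<noteq> (\<lambda>_. 0)" and v: "v \<noteq> (\<lambda>_. 0)"
    and s_eq: "skew_mult \<alpha> s u = skew_mult \<alpha> (skew_subst_q2 \<iota> s) v"
    and g_eq: "skew_mult \<alpha> g u = skew_mult \<alpha> (skew_subst_q2 \<iota> g) v"
  shows "seq_subdegree g = seq_subdegree s"
proof -
  note s_coeffs = q2_relation_lowest_coeffs[OF \<iota> \<alpha> s u v s_eq]
  note g_coeffs = q2_relation_lowest_coeffs[OF \<iota> \<alpha> g u v g_eq]
  have "v (seq_subdegree v) \<noteq> 0"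
    using seq_subdegree_nonzero[OF v] .
  then have "\<iota> (qq ^ (2 * seq_subdegree g)) = \<iota> (qq ^ (2 * seq_subdegree s))"
    using s_coeffs(2) g_coeffs(2) by simp
  then have "qq ^ (2 * seq_subdegree g) = qq ^ (2 * seq_subdegree s)"
    using cq_division_algebra_inj[OF \<iota>] by (simp add: inj_eq)
  then show ?thesis
    by (simp add: qq_power_eq_iff)
qed

lemma skew_frac_eq_scaled_const:
  assumes "algebra_iso \<iota> \<alpha>" and "skew_poly s" and "s \<noteq> (\<lambda>_. 0)"
  shows "skew_frac_eq \<alpha> (\<lambda>i. a * s i, s) (skew_const a, skew_const 1)"
proof -
  have "skew_poly (skew_const (1::'a))"
    by (simp add: skew_poly_def skew_const_def)
  with assms show ?thesis
    unfolding skew_frac_eq_def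
    by (intro exI[of _ "skew_const 1"] exI[of _ s])
      (simp add: skew_mult_const_one_right skew_mult_const_left)
qed

theorem lemma5:
  fixes \<iota> :: "cq \<Rightarrow> 'a::division_ring" and \<alpha> :: "'a \<Rightarrow> 'a"
    and p s :: "nat \<Rightarrow> 'a"
  assumes "cq_division_algebra \<iota>"
    and "algebra_iso \<iota> \<alpha>"
    and "skew_poly p" and "skew_poly s" and "s \<noteq> (\<lambda>_. 0)"
    and "skew_frac_eq \<alpha> (p, s) (skew_subst_q2 \<iota> p, skew_subst_q2 \<iota> s)"
  shows "\<exists>a. skew_frac_eq \<alpha> (p, s) (skew_const a, skew_const 1)"
proof -
  obtain u v where s_eq: "skew_mult \<alpha> s u = skew_mult \<alpha> (skew_subst_q2 \<iota> s) v"
    and su: "skew_mult \<alpha> s u \<noteq> (\<lambda>_. 0)"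
    and p_eq: "skew_mult \<alpha> p u = skew_mult \<alpha> (skew_subst_q2 \<iota> p) v"
    using assms(6) unfolding skew_frac_eq_def by auto
  have "u \<noteq> (\<lambda>_. 0)" and "v \<noteq> (\<lambda>_. 0)"
    using su s_eq skew_mult_zero_right[OF assms(2)] by metis+
  define m where "m = seq_subdegree s"
  define a where "a = p m * inverse (s m)"
  define g where "g = (\<lambda>i. p i - a * s i)"
  have "g m = 0"
    using seq_subdegree_nonzero[OF assms(5)] by (simp add: g_def a_def m_def mult.assoc)
  moreover have "skew_mult \<alpha> g u = skew_mult \<alpha> (skew_subst_q2 \<iota> g) v"
    unfolding g_def skew_subst_q2_diff_scaled[OF assms(1)] skew_mult_diff_scaled_left
    using s_eq p_eq by simp
  ultimately have "g = (\<lambda>_. 0)"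
    using q2_relation_subdegree_unique[OF assms(1,2,5) _ \<open>u \<noteq> _\<close> \<open>v \<noteq> _\<close> s_eq]
      seq_subdegree_nonzero[of g] m_def by metis
  then have "p = (\<lambda>i. a * s i)"
    by (simp add: g_def fun_eq_iff)
  then show ?thesis
    using skew_frac_eq_scaled_const[OF assms(2,4,5)] by blast
qed

end
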